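(* Let $k\ge2$, $n=2^k-1$, and let $C$ be the binary simplex $(n,k)$ code. Then every erasure pattern with at most $\frac{n-1}{2}$ erasures allows for parallel easy repair.
   Context: The binary simplex $(n,k)$ code, $n=2^k-1$, has generator matrix $G\in\mathbb F_2^{k\times n}$ whose columns $g_1,\dots,g_n$ are all the distinct nonzero vectors of $\mathbb F_2^k$; its minimum distance is $2^{k-1}$. Nodes are the coordinates $c_1,\dots,c_n$ of codewords $c=uG$. An erasure pattern is a set $S^e\subseteq\{1,\dots,n\}$ of erased nodes; the other nodes are live. A node $c_i$ is related to distinct nodes $c_{j_1},\dots,c_{j_\gamma}$ (all different from $c_i$) if $g_i=g_{j_1}+\dots+g_{j_\gamma}$. An erased node allows for $r$-repair if it is related to $\gamma\le r$ nodes which are all live; easy repair means $2$-repair (so $\gamma\in\{1,2\}$). An erasure pattern allows for parallel easy repair if each of its erased nodes allows for easy repair with respect to the original set of live nodes. *)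

theory Defs
  imports "HOL-Analysis.Analysis" "HOL-Library.Z2"
begin

text \<open>Columns of the generator matrix are given by g :: nat => vector; node i (1 <= i <= n)
  corresponds to column g i.\<close>

definition related :: "(nat \<Rightarrow> 'a::comm_monoid_add) \<Rightarrow> nat \<Rightarrow> nat set \<Rightarrow> bool" where
  "related g i J \<longleftrightarrow> finite J \<and> J \<noteq> {} \<and> i \<notin> J \<and> g i = (\<Sum>j\<in>J. g j)"

definition allows_repair :: "nat \<Rightarrow> (nat \<Rightarrow> 'a::comm_monoid_add) \<Rightarrow> nat set \<Rightarrow> nat \<Rightarrow> bool" where
  "allows_repair r g live i \<longleftrightarrow> (\<exists>J. related g i J \<and> card J \<le> r \<and> J \<subseteq> live)"

definition allows_easy_repair :: "(nat \<Rightarrow> 'a::comm_monoid_add) \<Rightarrow> nat set \<Rightarrow> nat \<Rightarrow> bool" where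
  "allows_easy_repair g live i \<longleftrightarrow> allows_repair 2 g live i"

definition allows_parallel_easy_repair :: "(nat \<Rightarrow> 'a::comm_monoid_add) \<Rightarrow> nat \<Rightarrow> nat set \<Rightarrow> bool" where
  "allows_parallel_easy_repair g n S \<longleftrightarrow> (\<forall>i\<in>S. allows_easy_repair g ({1..n} - S) i)"

text \<open>g is a simplex generator matrix of dimension k = CARD('k): its columns g 1, ..., g n
  (n = 2^k - 1) are exactly the distinct nonzero vectors of F_2^k.\<close>
definition simplex_generator :: "(nat \<Rightarrow> bit ^ 'k) \<Rightarrow> bool" where
  "simplex_generator g \<longleftrightarrow> bij_betw g {1..2 ^ CARD('k) - 1} (UNIV - {0})"

end

theory Submission
  imports Defs
begin

text \<open>The erased nodes other than \<open>i\<close> block at most \<open>2(|S| - 1) \<le> n - 3\<close> of the \<open>n - 1\<close> nonzero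
  vectors \<open>a \<noteq> g i\<close>: each erased column \<open>b\<close> blocks \<open>b\<close> and \<open>g i - b\<close>. Hence some \<open>a\<close> has both
  \<open>a\<close> and \<open>g i - a\<close> on live columns, and these two columns sum to \<open>g i\<close>; over \<open>\<F>\<^sub>2\<close> they are
  distinct because \<open>a + a = 0 \<noteq> g i\<close>.\<close>

lemma vec_bit_add_self [simp]: "(x :: bit ^ 'k) + x = 0"
  by (simp add: vec_eq_iff flip: mult_2)

lemma exists_avoiding_with_complement:
  fixes B N :: "'a::ab_group_add set"
  assumes "finite B" and "2 * card B < card N"
  shows "\<exists>a\<in>N. a \<notin> B \<and> v - a \<notin> B"
proof (rule ccontr)
  assume "\<not> ?thesis"
  then have "N \<subseteq> B \<union> (\<lambda>b. v - b) ` B"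
    by force
  then have "card N \<le> card (B \<union> (\<lambda>b. v - b) ` B)"
    using assms(1) by (intro card_mono) auto
  also have "\<dots> \<le> card B + card ((\<lambda>b. v - b) ` B)"
    by (rule card_Un_le)
  also have "\<dots> \<le> 2 * card B"
    using card_image_le[OF assms(1)] by simp
  finally show False
    using assms(2) by simp
qed

lemma related_pairI:
  assumes "g i = g j + g l" and "g i \<noteq> g j" and "g i \<noteq> g l" and "g j \<noteq> g l"
  shows "related g i {j, l}"
proof -
  have "j \<noteq> l" and "i \<notin> {j, l}"
    using assms(2-4) by auto
  then show ?thesis
    using assms(1) by (simp add: related_def)
qed

lemma simplex_allows_easy_repair:
  fixes g :: "nat \<Rightarrow> bit ^ 'k"
  assumes simplex: "simplex_generator g" and n: "n = 2 ^ CARD('k) - 1"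
    and i: "i \<in> {1..n}" and E: "E \<subseteq> {1..n}" and few: "2 * card (E - {i}) < n - 1"
  shows "allows_easy_repair g ({1..n} - E) i"
proof -
  have bij: "bij_betw g {1..n} (UNIV - {0})"
    using simplex n by (simp add: simplex_generator_def)
  then have onto: "g ` {1..n} = UNIV - {0}"
    by (simp add: bij_betw_def)
  have card_nonzero: "card (UNIV - {0 :: bit ^ 'k}) = n"
    using bij_betw_same_card[OF bij] by simp
  define v where "v = g i"
  have "v \<noteq> 0"
    using i onto unfolding v_def by blast
  define B where "B = g ` (E - {i})"
  have "finite B"
    using E unfolding B_def by (simp add: finite_subset)
  have "card B \<le> card (E - {i})"
    unfolding B_def using E by (intro card_image_le) (simp add: finite_subset)
  moreover have "card (UNIV - {0} - {v}) = n - 1"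
    using card_nonzero \<open>v \<noteq> 0\<close> by (simp add: card_Diff_singleton)
  ultimately have "2 * card B < card (UNIV - {0} - {v})"
    using few by linarith
  then obtain a where a: "a \<noteq> 0" "a \<noteq> v" and "a \<notin> B" "v - a \<notin> B"
    using exists_avoiding_with_complement[OF \<open>finite B\<close>] by blast
  have "v - a \<noteq> 0" and "v - a \<noteq> v"
    using a by auto
  obtain j where j: "j \<in> {1..n}" "g j = a"
    using onto a(1) by (metis DiffI UNIV_I imageE singletonD)
  obtain l where l: "l \<in> {1..n}" "g l = v - a"
    using onto \<open>v - a \<noteq> 0\<close> by (metis DiffI UNIV_I imageE singletonD)
  have "j \<notin> E - {i}" and "l \<notin> E - {i}"
    using \<open>a \<notin> B\<close> \<open>v - a \<notin> B\<close> j(2) l(2) unfolding B_def by (metis imageI)+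
  moreover have "j \<noteq> i" and "l \<noteq> i"
    using j(2) l(2) a(2) \<open>v - a \<noteq> v\<close> unfolding v_def by auto
  ultimately have "j \<notin> E" and "l \<notin> E"
    by auto
  have "a \<noteq> v - a"
    using \<open>v \<noteq> 0\<close> by (metis diff_add_cancel vec_bit_add_self)
  then have "related g i {j, l}"
    using a \<open>v - a \<noteq> v\<close> j l by (intro related_pairI) (auto simp: v_def)
  moreover have "card {j, l} \<le> 2"
    by (simp add: card_insert_le_m1)
  ultimately show ?thesis
    using j l \<open>j \<notin> E\<close> \<open>l \<notin> E\<close>
    unfolding allows_easy_repair_def allows_repair_def by blast
qed

theorem theorem3p1:
  fixes g :: "nat \<Rightarrow> bit ^ 'k" and n :: nat and S :: "nat set"
  assumes "CARD('k) \<ge> 2"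
    and "n = 2 ^ CARD('k) - 1"
    and "simplex_generator g"
    and "S \<subseteq> {1..n}"
    and "real (card S) \<le> (real n - 1) / 2"
  shows "allows_parallel_easy_repair g n S"
  unfolding allows_parallel_easy_repair_def
proof
  fix i assume "i \<in> S"
  have "finite S"
    using assms(4) finite_subset by blast
  then have "card (S - {i}) = card S - 1" and "card S \<ge> 1"
    using \<open>i \<in> S\<close> by (auto simp: Suc_le_eq card_gt_0_iff)
  moreover have "real (2 * card S + 1) \<le> real n"
    using assms(5) by simp
  then have "2 * card S + 1 \<le> n"
    by (simp only: of_nat_le_iff)
  ultimately have "2 * card (S - {i}) < n - 1"
    by linarith
  then show "allows_easy_repair g ({1..n} - S) i"
    using simplex_allows_easy_repair assms(2-4) \<open>i \<in> S\<close> by blast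
qed

end
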